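(* Let $N\geq 2$ be an integer. For real $\theta$ and $\varepsilon\geq 0$ let $G_\theta(\varepsilon)=(1+\theta)^N+\big(1-\theta(1+\varepsilon)\big)^N-2$ and $\varepsilon_c(\theta)=\inf\{\varepsilon>0: G_\theta(\varepsilon)\leq 0\}$ (with $\inf\emptyset=+\infty$). For positive $\theta\neq 2^{1/N}-1$ define $$f(\theta)=\big(2-(1+\theta)^N\big)^{1/N}-1+\theta(1+\theta)^{N-1}\big(2-(1+\theta)^N\big)^{\frac1N-1}.$$ Then on the interval $0<\theta<2^{1/N}-1$ the function $\varepsilon_c$ is differentiable and monotonically increasing, with derivative $$\varepsilon_c'(\theta)=\frac{f(\theta)}{\theta^2}.$$
   Context: Root convention: for real $X>0$, $X^{1/N}$ is the positive real $N$-th root; for $X<0$ and $N$ odd, $X^{1/N}=-|X|^{1/N}$; and for an integer $m$, $X^{1/N-m}$ is defined as $Y^{1/N}$ with $Y=X^{1-mN}$, evaluated by the same convention. On the interval $0<\theta<2^{1/N}-1$ one has $2-(1+\theta)^N>0$, so all roots are ordinary positive roots. *)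

theory Defs
  imports "HOL-Analysis.Analysis"
begin

definition G :: "nat \<Rightarrow> real \<Rightarrow> real \<Rightarrow> real" where
  "G N \<theta> \<epsilon> = (1 + \<theta>) ^ N + (1 - \<theta> * (1 + \<epsilon>)) ^ N - 2"

text \<open>Infimum in the extended reals, so that the infimum of the empty set is +infinity.\<close>
definition eps_c :: "nat \<Rightarrow> real \<Rightarrow> ereal" where
  "eps_c N \<theta> = Inf (ereal ` {\<epsilon>. \<epsilon> > 0 \<and> G N \<theta> \<epsilon> \<le> 0})"

text \<open>Root convention: root N is the real N-th root (sign preserving);
  X^(1/N - 1) is root N of X^(1-N) = inverse (X^(N-1)).\<close>
definition f :: "nat \<Rightarrow> real \<Rightarrow> real" where
  "f N \<theta> = root N (2 - (1 + \<theta>) ^ N) - 1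
     + \<theta> * (1 + \<theta>) ^ (N - 1) * root N (inverse ((2 - (1 + \<theta>) ^ N) ^ (N - 1)))"

end

theory Submission
  imports Defs
begin

text \<open>For \<open>0 < \<theta> < 2 powr (1/N) - 1\<close> the number \<open>a = (2 - (1+\<theta>)^N) powr (1/N)\<close> lies in
  \<open>(0, 1 - \<theta>)\<close>, and for \<open>\<epsilon> > 0\<close> the condition \<open>G \<theta> \<epsilon> \<le> 0\<close> says \<open>(1 - \<theta>(1+\<epsilon>))^N \<le> a^N\<close>,
  which forces \<open>1 - \<theta>(1+\<epsilon>) \<le> a\<close>. So the infimum is attained at \<open>1 - \<theta>(1+\<epsilon>) = a\<close>, giving the
  closed form \<open>\<epsilon>_c(\<theta>) = (1 - a)/\<theta> - 1\<close>, which is differentiated directly.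
  Monotonicity amounts to \<open>f \<ge> 0\<close>. With \<open>x = 1 + \<theta>\<close>, so that \<open>a^N + x^N = 2\<close>, this reads
  \<open>a^N - a^(N-1) + x^N - x^(N-1) \<ge> 0\<close>, which follows by adding the weighted AM-GM inequalities
  \<open>N t^(N-1) \<le> (N-1) t^N + 1\<close> for \<open>t = a\<close> and \<open>t = x\<close>.\<close>

lemma power_sum_one_plus_one_minus_gt_two:
  fixes t :: real
  assumes "0 < t" "t < 1" "2 \<le> n"
  shows "2 < (1 + t) ^ n + (1 - t) ^ n"
  using assms(3)
proof (induction n rule: dec_induct)
  case base
  then show ?case using assms by (simp add: power2_eq_square algebra_simps)
next
  case (step m)
  have "(1 - t) ^ m \<le> (1 + t) ^ m" using assms by (intro power_mono) auto
  then have "0 \<le> t * ((1 + t) ^ m - (1 - t) ^ m)" using assms by simp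
  moreover have "(1 + t) ^ Suc m + (1 - t) ^ Suc m
      = (1 + t) ^ m + (1 - t) ^ m + t * ((1 + t) ^ m - (1 - t) ^ m)"
    by (simp add: algebra_simps)
  ultimately show ?case using step by linarith
qed

lemma weighted_am_gm_power:
  fixes t :: real
  assumes "0 \<le> t"
  shows "real (Suc n) * t ^ n \<le> real n * t ^ Suc n + 1"
proof (induction n)
  case 0
  then show ?case by simp
next
  case (Suc n)
  have IH: "real (Suc n) * t ^ Suc n \<le> real n * t ^ Suc (Suc n) + t"
    using mult_right_mono[OF Suc assms] by (simp add: algebra_simps)
  have "0 \<le> (1 - t) * (1 - t ^ Suc n)"
  proof (cases "t \<le> 1")
    case True
    then have "t ^ Suc n \<le> 1" using assms by (metis power_le_one)
    then show ?thesis using True by simp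
  next
    case False
    then have "1 \<le> t ^ Suc n" by (intro one_le_power) simp
    then show ?thesis using False by (simp add: mult_nonpos_nonpos)
  qed
  then have "t + t ^ Suc n \<le> t ^ Suc (Suc n) + 1" by (simp add: algebra_simps)
  with IH show ?case by (simp add: algebra_simps)
qed

lemma below_root_two_bounds:
  assumes N: "N \<ge> 2" and t: "0 < t" "t < root N 2 - 1"
  shows "t < 1" "0 < 2 - (1 + t) ^ N"
    "0 < root N (2 - (1 + t) ^ N)" "root N (2 - (1 + t) ^ N) < 1 - t"
proof -
  have "(1 + t) ^ N < root N 2 ^ N"
    using t N by (intro power_strict_mono) auto
  also have "\<dots> = 2" using N by (simp add: real_root_pow_pos2)
  finally have below_two: "(1 + t) ^ N < 2" .
  have "1 + real N * t \<le> (1 + t) ^ N" using t by (intro Bernoulli_inequality) auto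
  moreover have "2 * t \<le> real N * t" using N t by (intro mult_right_mono) auto
  ultimately show t_lt_1: "t < 1" using below_two by linarith
  show pos: "0 < 2 - (1 + t) ^ N" using below_two by simp
  then show "0 < root N (2 - (1 + t) ^ N)" using N by simp
  have "2 - (1 + t) ^ N < (1 - t) ^ N"
    using power_sum_one_plus_one_minus_gt_two[OF t(1) t_lt_1 N] by simp
  then have "root N (2 - (1 + t) ^ N) < root N ((1 - t) ^ N)" using N by simp
  also have "\<dots> = 1 - t" using N t_lt_1 by (simp add: real_root_pos2)
  finally show "root N (2 - (1 + t) ^ N) < 1 - t" .
qed

definition eps_c_closed :: "nat \<Rightarrow> real \<Rightarrow> real" where
  "eps_c_closed N t = (1 - root N (2 - (1 + t) ^ N)) / t - 1"

lemma eps_c_eq_closed: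
  assumes N: "N \<ge> 2" and t: "0 < t" "t < root N 2 - 1"
  shows "eps_c N t = ereal (eps_c_closed N t)"
proof -
  note bounds = below_root_two_bounds[OF assms]
  define a where "a = root N (2 - (1 + t) ^ N)"
  have a_pow: "a ^ N = 2 - (1 + t) ^ N"
    unfolding a_def using bounds(2) N by (simp add: real_root_pow_pos2)
  have a_pos: "0 < a" and a_less: "a < 1 - t" using bounds unfolding a_def by auto
  have at_closed: "1 - t * (1 + eps_c_closed N t) = a"
    using t unfolding eps_c_closed_def a_def by (simp add: field_simps)
  have closed_pos: "0 < eps_c_closed N t"
    using a_less t unfolding eps_c_closed_def a_def by (simp add: field_simps)
  define S where "S = {\<epsilon>. \<epsilon> > 0 \<and> G N t \<epsilon> \<le> 0}"
  have closed_in_S: "eps_c_closed N t \<in> S"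
    unfolding S_def G_def using closed_pos at_closed a_pow by simp
  have closed_le: "eps_c_closed N t \<le> \<epsilon>" if "\<epsilon> \<in> S" for \<epsilon>
  proof (rule ccontr)
    assume "\<not> eps_c_closed N t \<le> \<epsilon>"
    then have "t * (1 + \<epsilon>) < t * (1 + eps_c_closed N t)" using t by simp
    then have "a < 1 - t * (1 + \<epsilon>)" using at_closed by linarith
    then have "a ^ N < (1 - t * (1 + \<epsilon>)) ^ N" using a_pos N by (intro power_strict_mono) auto
    then have "G N t \<epsilon> > 0" unfolding G_def using a_pow by simp
    then show False using that unfolding S_def by auto
  qed
  have "eps_c N t = Inf (ereal ` S)" unfolding eps_c_def S_def ..
  also have "\<dots> = ereal (eps_c_closed N t)"
  proof (rule antisym)
    show "Inf (ereal ` S) \<le> ereal (eps_c_closed N t)" using closed_in_S by (intro Inf_lower) auto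
    show "ereal (eps_c_closed N t) \<le> Inf (ereal ` S)" using closed_le by (intro Inf_greatest) auto
  qed
  finally show ?thesis .
qed

lemma f_eq_root_form:
  assumes "N \<ge> 2"
  shows "f N t = root N (2 - (1 + t) ^ N) - 1
    + t * (1 + t) ^ (N - 1) / root N (2 - (1 + t) ^ N) ^ (N - 1)"
  unfolding f_def using assms by (simp add: real_root_inverse real_root_power divide_inverse)

lemma f_nonneg:
  assumes N: "N \<ge> 2" and t: "0 < t" "t < root N 2 - 1"
  shows "0 \<le> f N t"
proof -
  note bounds = below_root_two_bounds[OF assms]
  define a where "a = root N (2 - (1 + t) ^ N)"
  define x where "x = 1 + t"
  obtain m where m: "N = Suc m" using N by (cases N) auto
  have "a ^ N + x ^ N = 2"
    unfolding a_def x_def using bounds(2) N by (simp add: real_root_pow_pos2)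
  then have pow_sum: "a ^ Suc m + x ^ Suc m = 2" using m by simp
  have a_pos: "0 < a" using bounds a_def by auto
  have "real (Suc m) * (a ^ m + x ^ m) \<le> real m * (a ^ Suc m + x ^ Suc m) + 2"
    using weighted_am_gm_power[of a m] weighted_am_gm_power[of x m] a_pos t
    by (simp add: x_def algebra_simps)
  also have "\<dots> = real (Suc m) * 2" using pow_sum by simp
  finally have "a ^ m + x ^ m \<le> 2"
    by (simp only: mult_le_cancel_left_pos of_nat_0_less_iff zero_less_Suc)
  then have "0 \<le> (a - 1) * a ^ m + t * x ^ m"
    using pow_sum unfolding x_def by (simp add: algebra_simps)
  then have "0 \<le> ((a - 1) * a ^ m + t * x ^ m) / a ^ m" using a_pos by simp
  also have "\<dots> = f N t"
    using f_eq_root_form[OF N, of t] a_pos m unfolding a_def[symmetric] x_def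
    by (simp add: field_simps)
  finally show ?thesis .
qed

lemma eps_c_closed_has_derivative:
  assumes N: "N \<ge> 2" and t: "0 < t" "t < root N 2 - 1"
  shows "(eps_c_closed N has_real_derivative f N t / t\<^sup>2) (at t)"
proof -
  note bounds = below_root_two_bounds[OF assms]
  define a where "a = root N (2 - (1 + t) ^ N)"
  define a' where "a' = inverse (real N * a ^ (N - 1)) * - (real N * (1 + t) ^ (N - 1))"
  have a_pos: "0 < a" using bounds a_def by auto
  have inner_deriv:
    "((\<lambda>s. 2 - (1 + s) ^ N) has_real_derivative - (real N * (1 + t) ^ (N - 1))) (at t)"
    by (auto intro!: derivative_eq_intros)
  have root_deriv: "((\<lambda>s. root N (2 - (1 + s) ^ N)) has_real_derivative a') (at t)"
    unfolding a_def a'_def using DERIV_chain2[OF DERIV_real_root inner_deriv] N bounds(2) by simp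
  have "((\<lambda>s. (1 - root N (2 - (1 + s) ^ N)) / s - 1) has_real_derivative
      ((0 - a') * t - (1 - a) * 1) / (t * t) - 0) (at t)"
    unfolding a_def using t by (intro DERIV_diff DERIV_divide DERIV_const DERIV_ident root_deriv) auto
  moreover have "((0 - a') * t - (1 - a) * 1) / (t * t) - 0 = f N t / t\<^sup>2"
    unfolding f_eq_root_form[OF N, of t] a_def[symmetric] a'_def using a_pos t N
    by (simp add: field_simps power2_eq_square)
  ultimately show ?thesis by (simp add: eps_c_closed_def[abs_def])
qed

lemma mono_on_eps_c_closed:
  assumes "N \<ge> 2"
  shows "mono_on {0<..<root N 2 - 1} (eps_c_closed N)"
proof (rule mono_onI)
  fix x y assume x: "x \<in> {0<..<root N 2 - 1}" and y: "y \<in> {0<..<root N 2 - 1}" and "x \<le> y"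
  then have deriv: "(eps_c_closed N has_real_derivative f N z / z\<^sup>2) (at z)" if "x \<le> z" "z \<le> y" for z
    using that by (intro eps_c_closed_has_derivative[OF assms]) auto
  show "eps_c_closed N x \<le> eps_c_closed N y"
  proof (rule DERIV_nonneg_imp_increasing_open[OF \<open>x \<le> y\<close>])
    fix z assume "x < z" "z < y"
    then show "\<exists>d. (eps_c_closed N has_real_derivative d) (at z) \<and> 0 \<le> d"
      using deriv f_nonneg[OF assms, of z] x y by (intro exI[of _ "f N z / z\<^sup>2"]) auto
  next
    show "continuous_on {x..y} (eps_c_closed N)"
      using deriv by (intro continuous_at_imp_continuous_on ballI DERIV_isCont) auto
  qed
qed

theorem lemma2:
  fixes N :: nat
  assumes "N \<ge> 2"
  shows "(\<forall>\<theta>. 0 < \<theta> \<and> \<theta> < root N 2 - 1 \<longrightarrow>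
            eps_c N \<theta> \<noteq> \<infinity> \<and>
            ((\<lambda>t. real_of_ereal (eps_c N t)) has_real_derivative f N \<theta> / \<theta>^2) (at \<theta>))
       \<and> mono_on {0<..<root N 2 - 1} (eps_c N)"
proof (intro conjI allI impI)
  fix \<theta> :: real assume \<theta>: "0 < \<theta> \<and> \<theta> < root N 2 - 1"
  show "eps_c N \<theta> \<noteq> \<infinity>" using eps_c_eq_closed[OF assms] \<theta> by simp
  show "((\<lambda>t. real_of_ereal (eps_c N t)) has_real_derivative f N \<theta> / \<theta>^2) (at \<theta>)"
  proof (rule has_field_derivative_transform_within_open)
    show "(eps_c_closed N has_real_derivative f N \<theta> / \<theta>^2) (at \<theta>)"
      using \<theta> by (intro eps_c_closed_has_derivative[OF assms]) auto
    show "eps_c_closed N t = real_of_ereal (eps_c N t)" if "t \<in> {0<..<root N 2 - 1}" for t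
      using eps_c_eq_closed[OF assms] that by simp
  qed (use \<theta> in auto)
next
  show "mono_on {0<..<root N 2 - 1} (eps_c N)"
    using mono_on_eps_c_closed[OF assms] eps_c_eq_closed[OF assms]
    by (auto simp: mono_on_def)
qed

end
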